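(* Let $p$ be an odd prime, let $k,m$ be positive integers with $\frac p2<k<p$. Then $$\binom{2mp+2k}{mp+k}\equiv(2m+1)\binom{2m}{m}\binom{2k}{k}\pmod{p^2}.$$ *)

theory Defs
  imports "HOL-Number_Theory.Number_Theory"
begin

end

theory Submission
  imports Defs
begin

text \<open>
  Write \<open>n! = p\<^bsup>\<lfloor>n/p\<rfloor>\<^esup> \<lfloor>n/p\<rfloor>! (n!)\<^sub>p\<close>, where \<open>(n!)\<^sub>p\<close> is the product of the numbers
  \<open>\<le> n\<close> prime to \<open>p\<close>. For \<open>n = mp + k\<close> with \<open>p \<le> 2k < 2p\<close> the lowest base-\<open>p\<close> digit carries
  when \<open>n\<close> is doubled, so \<open>\<lfloor>2n/p\<rfloor> = 2m + 1\<close>, which gives the exact identity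
  \<open>\<binom>2n n ((n!)\<^sub>p)\<^sup>2 = p (2m+1)\<binom>2m m ((2n)!)\<^sub>p\<close>, and for \<open>m = 0\<close> also
  \<open>\<binom>2k k ((k!)\<^sub>p)\<^sup>2 = p ((2k)!)\<^sub>p\<close>. Since \<open>(n!)\<^sub>p\<close> modulo \<open>p\<close> only changes by a factor
  \<open>(p-1)!\<close> when \<open>n\<close> grows by \<open>p\<close>, the \<open>p\<close>-free parts in the two identities agree
  modulo \<open>p\<close>; the common factor \<open>p\<close> upgrades this to a congruence modulo \<open>p\<^sup>2\<close>.
\<close>

fun fact_pfree :: "nat \<Rightarrow> nat \<Rightarrow> nat" where
  "fact_pfree p 0 = 1"
| "fact_pfree p (Suc n) = fact_pfree p n * (if p dvd Suc n then 1 else Suc n)"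

lemma coprime_fact_pfree:
  assumes "prime p"
  shows "coprime (fact_pfree p n) p"
proof (induction n)
  case (Suc n)
  have "coprime (if p dvd Suc n then 1 else Suc n) p"
    using assms by (auto simp: prime_imp_coprime coprime_commute)
  with Suc show ?case by simp
qed simp

lemma fact_pfree_eq_fact:
  assumes "n < p"
  shows "fact_pfree p n = fact n"
  using assms by (induction n) (auto dest: dvd_imp_le simp: algebra_simps)

lemma fact_pfree_prime_self:
  assumes "p > 0"
  shows "fact_pfree p p = fact (p - 1)"
proof -
  have "fact_pfree p p = fact_pfree p (Suc (p - 1))"
    using assms by simp
  also have "\<dots> = fact (p - 1)"
    using assms fact_pfree_eq_fact[of "p - 1" p] by (simp only: fact_pfree.simps(2)) simp
  finally show ?thesis .
qed

lemma fact_pfree_add_prime_cong: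
  assumes "p > 0"
  shows "[fact_pfree p (n + p) = fact (p - 1) * fact_pfree p n] (mod p)"
proof (induction n)
  case 0
  show ?case using fact_pfree_prime_self[OF assms] by simp
next
  case (Suc n)
  have "Suc (n + p) mod p = Suc n mod p"
    by (metis add_Suc mod_add_self2)
  then have "[(if p dvd Suc (n + p) then 1 else Suc (n + p))
              = (if p dvd Suc n then 1 else Suc n)] (mod p)"
    by (auto simp: cong_def dvd_eq_mod_eq_0)
  from cong_mult[OF Suc this] show ?case
    by (simp add: ac_simps)
qed

lemma fact_pfree_add_mult_prime_cong:
  assumes "p > 0"
  shows "[fact_pfree p (n + a * p) = fact (p - 1) ^ a * fact_pfree p n] (mod p)"
proof (induction a)
  case (Suc a)
  have "[fact_pfree p (n + a * p + p) = fact (p - 1) * fact_pfree p (n + a * p)] (mod p)"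
    by (rule fact_pfree_add_prime_cong[OF assms])
  also have "[fact (p - 1) * fact_pfree p (n + a * p)
              = fact (p - 1) * (fact (p - 1) ^ a * fact_pfree p n)] (mod p)"
    using Suc by (rule cong_mult[OF cong_refl])
  finally show ?case
    by (simp add: ac_simps)
qed simp

lemma fact_eq_prime_power_fact_pfree:
  assumes "p > 0"
  shows "fact n = p ^ (n div p) * fact (n div p) * fact_pfree p n"
proof (induction n)
  case (Suc n)
  show ?case
  proof (cases "p dvd Suc n")
    case True
    then have div_Suc: "Suc n div p = Suc (n div p)"
      using assms by (simp add: div_Suc dvd_eq_mod_eq_0)
    have Suc_n: "Suc n = p * Suc (n div p)"
      using True div_Suc by (metis dvd_mult_div_cancel)
    have "fact (Suc n) = Suc n * fact n"
      by simp
    also have "\<dots> = p * Suc (n div p) * (p ^ (n div p) * fact (n div p) * fact_pfree p n)"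
      unfolding Suc.IH by (subst Suc_n) (rule refl)
    finally show ?thesis
      using div_Suc True by (simp add: algebra_simps)
  next
    case False
    then have "Suc n div p = n div p"
      using assms by (simp add: div_Suc dvd_eq_mod_eq_0)
    with Suc False show ?thesis
      by (simp add: algebra_simps)
  qed
qed simp

lemma double_div_prime_carry:
  fixes n p :: nat
  assumes "p > 0" and "p \<le> 2 * (n mod p)"
  shows "2 * n div p = 2 * (n div p) + 1"
proof -
  have "n mod p < p"
    using assms(1) by simp
  moreover have "2 * n = 2 * (n mod p) + 2 * (n div p * p)"
    using div_mult_mod_eq[of n p] by linarith
  moreover have "(2 * (n div p) + 1) * p = 2 * (n div p * p) + p"
    by (simp add: algebra_simps)
  ultimately have split: "2 * n = (2 * (n mod p) - p) + (2 * (n div p) + 1) * p"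
    and small: "2 * (n mod p) - p < p"
    using assms(2) by linarith+
  have "2 * n div p = (2 * (n div p) + 1) + (2 * (n mod p) - p) div p"
    unfolding split using assms(1) by (intro div_mult_self1) simp
  then show ?thesis
    using small by simp
qed

lemma fact_double_eq_central_binomial:
  "fact (2 * m + 1) = (2 * m + 1) * (2 * m choose m) * (fact m * fact m :: nat)"
proof -
  have "fact (2 * m) = fact m * fact (2 * m - m) * (2 * m choose m :: nat)"
    by (rule binomial_fact_lemma[symmetric]) simp
  then show ?thesis
    by (simp add: algebra_simps)
qed

lemma central_binomial_carry_fact_pfree:
  assumes "p > 0" and "p \<le> 2 * (n mod p)"
  defines "m \<equiv> n div p"
  shows "(2 * n choose n) * fact_pfree p n ^ 2
         = p * ((2 * m + 1) * (2 * m choose m)) * fact_pfree p (2 * n)"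
proof -
  have fact_n: "fact n = p ^ m * fact m * fact_pfree p n"
    using fact_eq_prime_power_fact_pfree[OF assms(1), of n] by (simp add: m_def)
  have fact_2n: "fact (2 * n) = p ^ (2 * m + 1) * fact (2 * m + 1) * fact_pfree p (2 * n)"
    using fact_eq_prime_power_fact_pfree[OF assms(1), of "2 * n"]
      double_div_prime_carry[OF assms(1,2)] by (simp add: m_def)
  have "p ^ (2 * m) = p ^ m * p ^ m"
    by (simp add: mult_2 power_add)
  then have "(p ^ (2 * m) * (fact m * fact m)) * ((2 * n choose n) * fact_pfree p n ^ 2)
             = fact n * fact n * (2 * n choose n)"
    unfolding fact_n by (simp add: power2_eq_square ac_simps)
  also have "\<dots> = fact (2 * n)"
    using binomial_fact_lemma[of n "2 * n"] by simp
  also have "\<dots> = (p ^ (2 * m) * (fact m * fact m))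
                   * (p * ((2 * m + 1) * (2 * m choose m)) * fact_pfree p (2 * n))"
    unfolding fact_2n fact_double_eq_central_binomial by (simp add: algebra_simps)
  finally show ?thesis
    using assms(1) by (subst (asm) mult_left_cancel) simp_all
qed

lemma fact_pfree_double_cross_cong:
  assumes "p > 0"
  shows "[fact_pfree p (2 * (k + m * p)) * fact_pfree p k ^ 2
          = fact_pfree p (2 * k) * fact_pfree p (k + m * p) ^ 2] (mod p)"
proof -
  let ?w = "fact (p - 1) ^ (2 * m)"
  have "[fact_pfree p (2 * k + (2 * m) * p) = ?w * fact_pfree p (2 * k)] (mod p)"
    by (rule fact_pfree_add_mult_prime_cong[OF assms])
  then have double: "[fact_pfree p (2 * (k + m * p)) = ?w * fact_pfree p (2 * k)] (mod p)"
    by (simp add: algebra_simps)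
  have "[fact_pfree p (k + m * p) ^ 2 = (fact (p - 1) ^ m * fact_pfree p k) ^ 2] (mod p)"
    using fact_pfree_add_mult_prime_cong[OF assms] by (rule cong_pow)
  then have square: "[fact_pfree p (k + m * p) ^ 2 = ?w * fact_pfree p k ^ 2] (mod p)"
    by (simp add: power_mult_distrib power_mult mult.commute)
  have "[fact_pfree p (2 * (k + m * p)) * fact_pfree p k ^ 2
         = ?w * fact_pfree p (2 * k) * fact_pfree p k ^ 2] (mod p)"
    using double by (rule cong_mult[OF _ cong_refl])
  also have "[?w * fact_pfree p (2 * k) * fact_pfree p k ^ 2
              = fact_pfree p (2 * k) * fact_pfree p (k + m * p) ^ 2] (mod p)"
    using cong_mult[OF cong_refl square, of "fact_pfree p (2 * k)"]
    by (simp add: cong_sym_eq ac_simps)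
  finally show ?thesis .
qed

lemma cong_square_of_cofactor_cong:
  fixes A B X a b q r p :: int
  assumes A: "A * q = p * X * a" and B: "B * r = p * b"
    and cofactors: "[a * r = b * q] (mod p)" and "coprime (q * r) p"
  shows "[A = X * B] (mod p ^ 2)"
proof -
  obtain t where t: "a * r - b * q = p * t"
    using cofactors by (auto simp: cong_iff_dvd_diff)
  have "A * (q * r) - X * B * (q * r) = (A * q) * r - X * (B * r) * q"
    by (simp add: ac_simps)
  also have "\<dots> = p * X * (a * r - b * q)"
    unfolding A B by (simp add: algebra_simps)
  also have "\<dots> = p ^ 2 * (X * t)"
    by (simp add: t power2_eq_square ac_simps)
  finally have "[A * (q * r) = X * B * (q * r)] (mod p ^ 2)"
    by (simp add: cong_iff_dvd_diff)
  moreover have "coprime (q * r) (p ^ 2)"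
    using assms(4) by simp
  ultimately show ?thesis
    by (simp add: cong_mult_rcancel)
qed

theorem lemma2p6:
  fixes p k m :: nat
  assumes "prime p" and "odd p"
    and "m > 0" and "k > 0"
    and "real p / 2 < real k" and "k < p"
  shows "[int ((2*m*p + 2*k) choose (m*p + k))
          = int (2*m + 1) * int ((2*m) choose m) * int ((2*k) choose k)] (mod (int p ^ 2))"
proof -
  define n where "n = k + m * p"
  have p: "p > 0" "p \<le> 2 * k"
    using prime_gt_0_nat[OF assms(1)] assms(5) by linarith+
  have n: "n mod p = k" "n div p = m"
    using assms(6) by (simp_all add: n_def)
  have carry_n: "(2 * n choose n) * fact_pfree p n ^ 2
                 = p * ((2 * m + 1) * (2 * m choose m)) * fact_pfree p (2 * n)"
    using central_binomial_carry_fact_pfree[OF p(1), of n, unfolded n] p(2) .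
  have carry_k: "(2 * k choose k) * fact_pfree p k ^ 2 = p * fact_pfree p (2 * k)"
    using central_binomial_carry_fact_pfree[OF p(1), of k] p assms(6) by simp
  have "int (2 * n choose n) * int (fact_pfree p n ^ 2)
        = int p * int ((2 * m + 1) * (2 * m choose m)) * int (fact_pfree p (2 * n))"
    by (simp only: carry_n flip: of_nat_mult)
  moreover have "int (2 * k choose k) * int (fact_pfree p k ^ 2) = int p * int (fact_pfree p (2 * k))"
    by (simp only: carry_k flip: of_nat_mult)
  moreover have "[int (fact_pfree p (2 * n)) * int (fact_pfree p k ^ 2)
                  = int (fact_pfree p (2 * k)) * int (fact_pfree p n ^ 2)] (mod int p)"
    unfolding of_nat_mult[symmetric] cong_int_iff n_def by (rule fact_pfree_double_cross_cong[OF p(1)])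
  moreover have "coprime (int (fact_pfree p n ^ 2) * int (fact_pfree p k ^ 2)) (int p)"
    using coprime_fact_pfree[OF assms(1)] by simp
  ultimately have "[int (2 * n choose n)
                    = int ((2 * m + 1) * (2 * m choose m)) * int (2 * k choose k)] (mod int p ^ 2)"
    by (rule cong_square_of_cofactor_cong)
  then show ?thesis
    by (simp add: n_def algebra_simps)
qed

end
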